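(* Let $V$ be a real vector space. Every maximal chain of vector subspaces of $V$ contains a unique basic subchain, and conversely every basic chain of vector subspaces of $V$ is contained in a unique maximal chain.
   Context: A chain of vector subspaces of $V$ is a set $F=\{F_a\}_{a\in A}$ of subspaces such that for $a\ne b$ one has a proper inclusion $F_a\subsetneq F_b$ or $F_b\subsetneq F_a$. A chain is maximal if it is not properly contained in another chain. A chain $F$ is basic if it is minimal (with respect to inclusion of chains) among chains with the following property: for every $x\in V$ there exist $F_a\subset F_b$ in $F$ with $\dim F_b/F_a=1$ and $x\in F_b\setminus F_a$. *)

theory Defs
  imports Complex_Main
begin

text \<open>The real vector space V is the whole type 'a. A chain is a set of linear
subspaces totally ordered by inclusion (distinct members are then properly nested).\<close>

definition subspace_chain :: "'a::real_vector set set \<Rightarrow> bool" where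
  "subspace_chain F \<longleftrightarrow> (\<forall>S\<in>F. subspace S) \<and> (\<forall>S\<in>F. \<forall>T\<in>F. S \<subseteq> T \<or> T \<subseteq> S)"

definition maximal_chain :: "'a::real_vector set set \<Rightarrow> bool" where
  "maximal_chain F \<longleftrightarrow> subspace_chain F \<and> (\<forall>G. subspace_chain G \<and> F \<subseteq> G \<longrightarrow> G = F)"

text \<open>dim (B / A) = 1 for subspaces A \<subseteq> B: B is spanned by A and one vector outside A.\<close>
definition quot_dim_one :: "'a::real_vector set \<Rightarrow> 'a set \<Rightarrow> bool" where
  "quot_dim_one A B \<longleftrightarrow> A \<subseteq> B \<and> (\<exists>v\<in>B. v \<notin> A \<and> B = span (insert v A))"

text \<open>Covering property (for nonzero vectors; 0 lies in every subspace).\<close>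
definition covers :: "'a::real_vector set set \<Rightarrow> bool" where
  "covers F \<longleftrightarrow> (\<forall>x. x \<noteq> 0 \<longrightarrow>
     (\<exists>A\<in>F. \<exists>B\<in>F. A \<subseteq> B \<and> quot_dim_one A B \<and> x \<in> B \<and> x \<notin> A))"

definition basic_chain :: "'a::real_vector set set \<Rightarrow> bool" where
  "basic_chain F \<longleftrightarrow> subspace_chain F \<and> covers F \<and>
     (\<forall>G. subspace_chain G \<and> covers G \<and> G \<subseteq> F \<longrightarrow> G = F)"

end

theory Submission
  imports Defs
begin

text \<open>A jump \<open>A \<subset> B\<close> of dimension one inside a chain cuts it: every member lies below \<open>A\<close> or
above \<open>B\<close>. Hence for each vector \<open>x\<close> a chain has at most one jump with \<open>x \<in> B - A\<close>, and any
covering subchain of a chain \<open>M\<close> must contain both ends of every jump of \<open>M\<close>. When \<open>M\<close> covers,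
these ends already form a covering subchain, which is therefore the unique basic subchain of \<open>M\<close>.
A maximal chain covers: for \<open>x \<noteq> 0\<close>, the union \<open>A\<close> of the members missing \<open>x\<close> and the span of
\<open>A \<union> {x}\<close> are comparable with every member, hence are members.
Conversely, Zorn's lemma extends a chain to a maximal one, and two chains containing a common
covering chain are comparable member by member (a vector of \<open>C\<^sub>1 - C\<^sub>2\<close> is separated by a jump
of the covering chain lying between \<open>C\<^sub>2\<close> and \<open>C\<^sub>1\<close>), so two maximal extensions have a union
that is again a chain and they coincide.\<close>

lemma subspace_chain_subspace: "subspace_chain M \<Longrightarrow> S \<in> M \<Longrightarrow> subspace S"
  unfolding subspace_chain_def by blast

lemma subspace_chain_total: "subspace_chain M \<Longrightarrow> S \<in> M \<Longrightarrow> T \<in> M \<Longrightarrow> S \<subseteq> T \<or> T \<subseteq> S"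
  unfolding subspace_chain_def by blast

lemma subspace_chain_subset: "subspace_chain M \<Longrightarrow> G \<subseteq> M \<Longrightarrow> subspace_chain G"
  unfolding subspace_chain_def by blast

lemma quot_dim_one_subset: "quot_dim_one A B \<Longrightarrow> A \<subseteq> B"
  unfolding quot_dim_one_def by blast

lemma coversI:
  assumes "\<And>x. x \<noteq> 0 \<Longrightarrow> \<exists>A\<in>F. \<exists>B\<in>F. quot_dim_one A B \<and> x \<in> B \<and> x \<notin> A"
  shows "covers F"
  using assms quot_dim_one_subset unfolding covers_def by meson

lemma coversE:
  assumes "covers F" and "x \<noteq> 0"
  obtains A B where "A \<in> F" "B \<in> F" "quot_dim_one A B" "x \<in> B" "x \<notin> A"
proof -
  have "\<exists>A\<in>F. \<exists>B\<in>F. A \<subseteq> B \<and> quot_dim_one A B \<and> x \<in> B \<and> x \<notin> A"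
    using assms unfolding covers_def by simp
  then show ?thesis using that by blast
qed

lemma quot_dim_one_no_intermediate:
  fixes A B C :: "'a::real_vector set"
  assumes q: "quot_dim_one A B" and "subspace A" and "subspace C"
    and AC: "A \<subseteq> C" and CB: "C \<subseteq> B"
  shows "C = A \<or> C = B"
proof (rule ccontr)
  assume neq: "\<not> (C = A \<or> C = B)"
  then obtain w where w: "w \<in> C" "w \<notin> A" using AC by blast
  from q obtain v where v: "v \<notin> A" "B = span (insert v A)"
    unfolding quot_dim_one_def by blast
  have "w \<in> span (insert v A)" using w CB v by blast
  moreover have "w \<notin> span A" using w \<open>subspace A\<close> by (metis span_eq_iff)
  ultimately have "v \<in> span (insert w A)" by (rule in_span_insert)
  also have "span (insert w A) \<subseteq> C" using w AC \<open>subspace C\<close> by (simp add: span_minimal)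
  finally have "B \<subseteq> C" using v AC \<open>subspace C\<close> by (simp add: span_minimal)
  then show False using neq CB by blast
qed

lemma subspace_chain_jump_cut:
  assumes M: "subspace_chain M" and "A \<in> M" "B \<in> M" "C \<in> M" and q: "quot_dim_one A B"
  shows "C \<subseteq> A \<or> B \<subseteq> C"
proof (rule ccontr)
  assume not_cut: "\<not> (C \<subseteq> A \<or> B \<subseteq> C)"
  have "C \<subseteq> A \<or> A \<subseteq> C" "C \<subseteq> B \<or> B \<subseteq> C"
    using subspace_chain_total[OF M] \<open>A \<in> M\<close> \<open>B \<in> M\<close> \<open>C \<in> M\<close> by blast+
  with not_cut have "A \<subseteq> C" "C \<subseteq> B" by blast+
  then have "C = A \<or> C = B"
    using quot_dim_one_no_intermediate[OF q] subspace_chain_subspace[OF M] \<open>A \<in> M\<close> \<open>C \<in> M\<close>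
    by blast
  with not_cut show False by blast
qed

lemma subspace_chain_jump_unique:
  assumes M: "subspace_chain M" and "A \<in> M" "B \<in> M" "A' \<in> M" "B' \<in> M"
    and q: "quot_dim_one A B" and q': "quot_dim_one A' B'"
    and x: "x \<in> B" "x \<notin> A" "x \<in> B'" "x \<notin> A'"
  shows "A = A' \<and> B = B'"
proof -
  have "A' \<subseteq> A \<or> B \<subseteq> A'" "B' \<subseteq> A \<or> B \<subseteq> B'"
    using subspace_chain_jump_cut[OF M \<open>A \<in> M\<close> \<open>B \<in> M\<close> _ q] \<open>A' \<in> M\<close> \<open>B' \<in> M\<close>
    by blast+
  moreover have "A \<subseteq> A' \<or> B' \<subseteq> A" "B \<subseteq> A' \<or> B' \<subseteq> B"
    using subspace_chain_jump_cut[OF M \<open>A' \<in> M\<close> \<open>B' \<in> M\<close> _ q'] \<open>A \<in> M\<close> \<open>B \<in> M\<close>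
    by blast+
  ultimately show ?thesis using x by blast
qed

definition jump_members :: "'a::real_vector set set \<Rightarrow> 'a set set" where
  "jump_members M = {C \<in> M. \<exists>D\<in>M. quot_dim_one C D \<or> quot_dim_one D C}"

lemma jump_members_subset: "jump_members M \<subseteq> M"
  unfolding jump_members_def by blast

lemma covers_jump_members:
  assumes "covers M"
  shows "covers (jump_members M)"
proof (rule coversI)
  fix x :: 'a assume "x \<noteq> 0"
  with \<open>covers M\<close> obtain A B where "A \<in> M" "B \<in> M" "quot_dim_one A B" "x \<in> B" "x \<notin> A"
    by (rule coversE)
  moreover from this have "A \<in> jump_members M" "B \<in> jump_members M"
    unfolding jump_members_def by blast+
  ultimately show "\<exists>A\<in>jump_members M. \<exists>B\<in>jump_members M. quot_dim_one A B \<and> x \<in> B \<and> x \<notin> A"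
    by blast
qed

lemma covering_subchain_contains_jump_members:
  assumes M: "subspace_chain M" and "G \<subseteq> M" and G: "covers G"
  shows "jump_members M \<subseteq> G"
proof -
  have ends: "A \<in> G \<and> B \<in> G" if "A \<in> M" "B \<in> M" and q: "quot_dim_one A B" for A B
  proof -
    obtain v where v: "v \<in> B" "v \<notin> A" using q unfolding quot_dim_one_def by blast
    then have "v \<noteq> 0" using subspace_0 subspace_chain_subspace[OF M \<open>A \<in> M\<close>] by blast
    with G obtain A' B' where "A' \<in> G" "B' \<in> G" "quot_dim_one A' B'" "v \<in> B'" "v \<notin> A'"
      by (rule coversE)
    moreover from this have "A = A' \<and> B = B'"
      using subspace_chain_jump_unique[OF M \<open>A \<in> M\<close> \<open>B \<in> M\<close> _ _ q] v \<open>G \<subseteq> M\<close>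
      by (meson subsetD)
    ultimately show ?thesis by simp
  qed
  show ?thesis
  proof
    fix C assume "C \<in> jump_members M"
    then obtain D where "C \<in> M" "D \<in> M" "quot_dim_one C D \<or> quot_dim_one D C"
      unfolding jump_members_def by blast
    then show "C \<in> G" using ends by blast
  qed
qed

lemma covering_chain_unique_basic_subchain:
  assumes M: "subspace_chain M" and "covers M"
  shows "\<exists>!B. B \<subseteq> M \<and> basic_chain B"
proof (rule ex1I)
  let ?J = "jump_members M"
  have chain: "subspace_chain ?J"
    using subspace_chain_subset[OF M jump_members_subset] .
  have cov: "covers ?J"
    using covers_jump_members[OF \<open>covers M\<close>] .
  have least: "?J \<subseteq> G" if "G \<subseteq> M" "covers G" for G
    using covering_subchain_contains_jump_members[OF M that] .
  show "?J \<subseteq> M \<and> basic_chain ?J"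
    unfolding basic_chain_def
  proof (intro conjI allI impI jump_members_subset chain cov)
    fix G assume G: "subspace_chain G \<and> covers G \<and> G \<subseteq> ?J"
    then have "?J \<subseteq> G" using least jump_members_subset by blast
    with G show "G = ?J" by blast
  qed
  fix B assume B: "B \<subseteq> M \<and> basic_chain B"
  then have "?J \<subseteq> B" using least unfolding basic_chain_def by blast
  with B chain cov show "B = ?J" unfolding basic_chain_def by blast
qed

lemma subspace_Union_chain:
  assumes "F \<noteq> {}" and F: "subspace_chain F"
  shows "subspace (\<Union>F)"
  unfolding subspace_def
proof (intro conjI ballI allI)
  obtain C where "C \<in> F" using \<open>F \<noteq> {}\<close> by blast
  then have "0 \<in> C" using subspace_0 subspace_chain_subspace[OF F] by blast
  then show "0 \<in> \<Union>F" using \<open>C \<in> F\<close> by blast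
next
  fix y z assume "y \<in> \<Union>F" "z \<in> \<Union>F"
  then obtain C D where CD: "C \<in> F" "D \<in> F" and "y \<in> C" "z \<in> D" by blast
  have "C \<subseteq> D \<or> D \<subseteq> C" using subspace_chain_total[OF F CD] .
  then have "y + z \<in> C \<or> y + z \<in> D"
    using \<open>y \<in> C\<close> \<open>z \<in> D\<close> subspace_chain_subspace[OF F] CD subspace_add by (metis subsetD)
  then show "y + z \<in> \<Union>F" using CD by blast
next
  fix c :: real and y assume "y \<in> \<Union>F"
  then obtain C where "C \<in> F" "y \<in> C" by blast
  then have "c *\<^sub>R y \<in> C" using subspace_chain_subspace[OF F] subspace_scale by blast
  then show "c *\<^sub>R y \<in> \<Union>F" using \<open>C \<in> F\<close> by blast
qed

lemma maximal_chain_subspace_chain: "maximal_chain M \<Longrightarrow> subspace_chain M"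
  unfolding maximal_chain_def by blast

lemma maximal_chain_memI:
  assumes M: "maximal_chain M" and "subspace S" and "\<And>D. D \<in> M \<Longrightarrow> S \<subseteq> D \<or> D \<subseteq> S"
  shows "S \<in> M"
proof -
  have chain: "subspace_chain M" using M by (rule maximal_chain_subspace_chain)
  have "subspace_chain (insert S M)"
    unfolding subspace_chain_def
    using assms(2,3) subspace_chain_subspace[OF chain] subspace_chain_total[OF chain] by blast
  then show ?thesis using M unfolding maximal_chain_def by blast
qed

lemma quot_dim_one_span_insert: "x \<notin> A \<Longrightarrow> quot_dim_one A (span (insert x A))"
  unfolding quot_dim_one_def
proof (intro conjI bexI)
  show "A \<subseteq> span (insert x A)" "x \<in> span (insert x A)"
    using span_superset by blast+
qed auto

lemma maximal_chain_covers:
  assumes M: "maximal_chain M"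
  shows "covers M"
proof (rule coversI)
  fix x :: 'a assume "x \<noteq> 0"
  have chain: "subspace_chain M" using M by (rule maximal_chain_subspace_chain)
  let ?L = "insert {0} {C \<in> M. x \<notin> C}"
  define A where "A = \<Union>?L"
  have below: "A \<subseteq> D" if "D \<in> M" "x \<in> D" for D
  proof -
    have "C \<subseteq> D" if "C \<in> M" "x \<notin> C" for C
      using subspace_chain_total[OF chain \<open>C \<in> M\<close> \<open>D \<in> M\<close>] that \<open>x \<in> D\<close> by blast
    moreover have "0 \<in> D" using subspace_0 subspace_chain_subspace[OF chain \<open>D \<in> M\<close>] .
    ultimately show ?thesis unfolding A_def by blast
  qed
  have above: "D \<subseteq> A" if "D \<in> M" "x \<notin> D" for D
    using that unfolding A_def by blast
  have "{0} \<subseteq> C" if "C \<in> M" for C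
    using subspace_0 subspace_chain_subspace[OF chain that] by blast
  then have "subspace_chain ?L"
    using subspace_chain_subset[OF chain, of "{C \<in> M. x \<notin> C}"] subspace_single_0
    unfolding subspace_chain_def by auto
  then have "subspace A" unfolding A_def by (intro subspace_Union_chain) simp_all
  have "x \<notin> A" using \<open>x \<noteq> 0\<close> unfolding A_def by blast
  have "A \<in> M"
    using maximal_chain_memI[OF M \<open>subspace A\<close>] below above by blast
  moreover have "span (insert x A) \<in> M"
  proof (rule maximal_chain_memI[OF M subspace_span])
    fix D assume "D \<in> M"
    show "span (insert x A) \<subseteq> D \<or> D \<subseteq> span (insert x A)"
    proof (cases "x \<in> D")
      case True
      then have "insert x A \<subseteq> D" using below[OF \<open>D \<in> M\<close>] by blast
      then show ?thesis using span_minimal subspace_chain_subspace[OF chain \<open>D \<in> M\<close>] by blast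
    next
      case False
      then show ?thesis using above[OF \<open>D \<in> M\<close>] span_superset by blast
    qed
  qed
  ultimately show "\<exists>A\<in>M. \<exists>B\<in>M. quot_dim_one A B \<and> x \<in> B \<and> x \<notin> A"
    using quot_dim_one_span_insert[OF \<open>x \<notin> A\<close>] \<open>x \<notin> A\<close> span_base[of x "insert x A"] by blast
qed

lemma subspace_chain_Union:
  assumes "\<And>G. G \<in> \<G> \<Longrightarrow> subspace_chain G" and "\<And>G H. G \<in> \<G> \<Longrightarrow> H \<in> \<G> \<Longrightarrow> G \<subseteq> H \<or> H \<subseteq> G"
  shows "subspace_chain (\<Union>\<G>)"
  unfolding subspace_chain_def
proof (intro conjI ballI)
  show "subspace S" if "S \<in> \<Union>\<G>" for S
    using that assms(1) subspace_chain_subspace by blast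
  fix S T assume "S \<in> \<Union>\<G>" "T \<in> \<Union>\<G>"
  then obtain G H where "G \<in> \<G>" "H \<in> \<G>" "S \<in> G" "T \<in> H" by blast
  then show "S \<subseteq> T \<or> T \<subseteq> S"
    using assms subspace_chain_total by (metis subsetD)
qed

lemma subspace_chain_extends_to_maximal:
  assumes "subspace_chain B"
  shows "\<exists>M. maximal_chain M \<and> B \<subseteq> M"
proof -
  let ?\<A> = "{G. subspace_chain G \<and> B \<subseteq> G}"
  have "\<exists>M\<in>?\<A>. \<forall>G\<in>?\<A>. M \<subseteq> G \<longrightarrow> G = M"
  proof (rule subset_Zorn_nonempty)
    show "?\<A> \<noteq> {}" using assms by blast
  next
    fix \<G> assume "\<G> \<noteq> {}" and "subset.chain ?\<A> \<G>"
    then have mem: "\<And>G. G \<in> \<G> \<Longrightarrow> subspace_chain G \<and> B \<subseteq> G"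
      and total: "\<And>G H. G \<in> \<G> \<Longrightarrow> H \<in> \<G> \<Longrightarrow> G \<subseteq> H \<or> H \<subseteq> G"
      unfolding subset_chain_def by blast+
    have "subspace_chain (\<Union>\<G>)" using mem total by (intro subspace_chain_Union) blast+
    moreover have "B \<subseteq> \<Union>\<G>" using \<open>\<G> \<noteq> {}\<close> mem by blast
    ultimately show "\<Union>\<G> \<in> ?\<A>" by blast
  qed
  then obtain M where "M \<in> ?\<A>" and "\<forall>G\<in>?\<A>. M \<subseteq> G \<longrightarrow> G = M" by blast
  then have "maximal_chain M" unfolding maximal_chain_def by blast
  with \<open>M \<in> ?\<A>\<close> show ?thesis by blast
qed

lemma subspace_chains_comparable_over_covering:
  assumes "covers B" and M: "subspace_chain M" "B \<subseteq> M" and N: "subspace_chain N" "B \<subseteq> N"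
    and "C \<in> M" "D \<in> N" "\<not> C \<subseteq> D"
  shows "D \<subseteq> C"
proof -
  obtain x where x: "x \<in> C" "x \<notin> D" using \<open>\<not> C \<subseteq> D\<close> by blast
  then have "x \<noteq> 0" using subspace_0 subspace_chain_subspace[OF N(1) \<open>D \<in> N\<close>] by blast
  with \<open>covers B\<close> obtain A A' where "A \<in> B" "A' \<in> B" and q: "quot_dim_one A A'" and "x \<in> A'" "x \<notin> A"
    by (rule coversE)
  then have "A' \<subseteq> C" "D \<subseteq> A"
    using subspace_chain_jump_cut[OF M(1) _ _ \<open>C \<in> M\<close> q] subspace_chain_jump_cut[OF N(1) _ _ \<open>D \<in> N\<close> q]
      x M(2) N(2) by blast+
  moreover have "A \<subseteq> A'" using q by (rule quot_dim_one_subset)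
  ultimately show ?thesis by blast
qed

lemma maximal_chain_unique_over_covering:
  assumes "covers B" and M: "maximal_chain M" "B \<subseteq> M" and N: "maximal_chain N" "B \<subseteq> N"
  shows "M = N"
proof -
  note chains = maximal_chain_subspace_chain[OF M(1)] maximal_chain_subspace_chain[OF N(1)]
  note across = subspace_chains_comparable_over_covering[OF \<open>covers B\<close>]
  have "subspace_chain (M \<union> N)"
    unfolding subspace_chain_def
  proof (intro conjI ballI)
    show "subspace S" if "S \<in> M \<union> N" for S
      using that subspace_chain_subspace chains by blast
    fix S T assume "S \<in> M \<union> N" "T \<in> M \<union> N"
    then consider "S \<in> M" "T \<in> M" | "S \<in> N" "T \<in> N" | "S \<in> M" "T \<in> N" | "S \<in> N" "T \<in> M"
      by blast
    then show "S \<subseteq> T \<or> T \<subseteq> S"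
    proof cases
      case 1 then show ?thesis using subspace_chain_total[OF chains(1)] by blast
    next
      case 2 then show ?thesis using subspace_chain_total[OF chains(2)] by blast
    next
      case 3 then show ?thesis using across[OF chains(1) M(2) chains(2) N(2)] by blast
    next
      case 4 then show ?thesis using across[OF chains(2) N(2) chains(1) M(2)] by blast
    qed
  qed
  then have "M \<union> N = M" "M \<union> N = N"
    using M(1) N(1) unfolding maximal_chain_def by blast+
  then show ?thesis by blast
qed

theorem lemma4:
  shows "(\<forall>M::'a::real_vector set set. maximal_chain M \<longrightarrow> (\<exists>!B. B \<subseteq> M \<and> basic_chain B))
       \<and> (\<forall>B::'a set set. basic_chain B \<longrightarrow> (\<exists>!M. maximal_chain M \<and> B \<subseteq> M))"
proof (intro conjI allI impI)
  fix M :: "'a set set" assume "maximal_chain M"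
  then show "\<exists>!B. B \<subseteq> M \<and> basic_chain B"
    by (intro covering_chain_unique_basic_subchain maximal_chain_subspace_chain maximal_chain_covers)
next
  fix B :: "'a set set" assume "basic_chain B"
  then have "subspace_chain B" and "covers B" unfolding basic_chain_def by blast+
  then obtain M where M: "maximal_chain M" "B \<subseteq> M"
    using subspace_chain_extends_to_maximal by blast
  show "\<exists>!M. maximal_chain M \<and> B \<subseteq> M"
  proof (rule ex1I)
    show "maximal_chain M \<and> B \<subseteq> M" using M ..
    show "N = M" if "maximal_chain N \<and> B \<subseteq> N" for N
      using maximal_chain_unique_over_covering[OF \<open>covers B\<close>] M that by blast
  qed
qed

end
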